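(* With $H,\boldsymbol{P}^h,\boldsymbol{A}^h,\boldsymbol{W}_V^h,\boldsymbol{W}_O^h,\alpha,\sigma_1,\sigma_2$ and $\mathrm{MSA}$ as follows — $\boldsymbol{A}^h=\mathrm{softmax}(\boldsymbol{P}^h)$ for $h=1,\dots,H$, $\alpha=\max_h\max_{i,j}\lvert\boldsymbol{P}^h_{ij}\rvert$, $\sigma_1=\max_h\lVert\boldsymbol{W}_V^h\rVert_2$, $\sigma_2=\max_h\lVert\boldsymbol{W}_O^h\rVert_2$, $\mathrm{MSA}(\boldsymbol{X})=\sum_{h=1}^H\boldsymbol{A}^h\boldsymbol{X}\boldsymbol{W}_V^h\boldsymbol{W}_O^h$ — let $\boldsymbol{X}\in\mathbb{R}^{n\times d}$ and $\boldsymbol{X}'=\mathrm{MSA}(\boldsymbol{X})+\boldsymbol{X}$. Then $$\lVert\mathrm{HC}[\boldsymbol{X}']\rVert_F\le\Big(1+\sigma_1\sigma_2H\sqrt{\tfrac{ne^{2\alpha}}{e^{2\alpha}+n-1}}\Big)\lVert\mathrm{HC}[\boldsymbol{X}]\rVert_F.$$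
   Context: $\boldsymbol{P}^h\in\mathbb{R}^{n\times n}$, $\boldsymbol{W}_V^h,\boldsymbol{W}_O^h\in\mathbb{R}^{d\times d}$. $\mathrm{softmax}$ is applied row-wise: $\mathrm{softmax}(\boldsymbol{P})_{ij}=e^{\boldsymbol{P}_{ij}}/\sum_t e^{\boldsymbol{P}_{it}}$. $\mathrm{HC}[\boldsymbol{X}]=(\boldsymbol{I}-\frac1n\boldsymbol{1}\boldsymbol{1}^T)\boldsymbol{X}$ with $\boldsymbol{1}$ the all-ones vector. $\lVert\cdot\rVert_F$ Frobenius norm, $\lVert\cdot\rVert_2$ spectral norm. *)

theory Defs
  imports "HOL-Analysis.Analysis"
begin

definition softmax :: "real^'n^'m \<Rightarrow> real^'n^'m" where
  "softmax P = (\<chi> i j. exp (P $ i $ j) / (\<Sum>t\<in>UNIV. exp (P $ i $ t)))"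

definition frob_norm :: "real^'c^'r \<Rightarrow> real" where
  "frob_norm X = sqrt (\<Sum>i\<in>UNIV. \<Sum>j\<in>UNIV. (X $ i $ j)^2)"

definition spec_norm :: "real^'c^'r \<Rightarrow> real" where
  "spec_norm W = onorm (\<lambda>x. W *v x)"

definition HC :: "real^'d^'n \<Rightarrow> real^'d^'n" where
  "HC X = (mat 1 - (\<chi> i j. 1 / real CARD('n))) ** X"

definition MSA :: "nat \<Rightarrow> (nat \<Rightarrow> real^'n^'n) \<Rightarrow> (nat \<Rightarrow> real^'d^'d) \<Rightarrow> (nat \<Rightarrow> real^'d^'d)
    \<Rightarrow> real^'d^'n \<Rightarrow> real^'d^'n" where
  "MSA H P WV WO X = (\<Sum>h<H. softmax (P h) ** X ** WV h ** WO h)"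

end

theory Submission
  imports Defs
begin

text \<open>
  Write \<open>HC X = X - J ** X\<close> with \<open>J\<close> the averaging matrix. Every row-stochastic \<open>A\<close>
  satisfies \<open>A ** J = J\<close>, hence \<open>HC (A ** X) = HC (A ** HC X)\<close>; moreover \<open>HC\<close> commutes
  with right multiplication and does not increase the Frobenius norm. So each head
  contributes at most \<open>\<parallel>A ** HC X\<parallel> \<parallel>W_V\<parallel>\<^sub>2 \<parallel>W_O\<parallel>\<^sub>2\<close>. Jensen's inequality on the rows
  gives \<open>\<parallel>A ** Y\<parallel>\<^sup>2 \<le> c \<parallel>Y\<parallel>\<^sup>2\<close> for \<open>c\<close> the largest column sum of \<open>A\<close>, and with all logits
  in \<open>[-\<alpha>, \<alpha>]\<close> every softmax entry is at most \<open>exp (2\<alpha>) / (exp (2\<alpha>) + n - 1)\<close>, which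
  bounds the column sums by \<open>n exp (2\<alpha>) / (exp (2\<alpha>) + n - 1)\<close>.
\<close>

definition averaging_matrix :: "real^'n^'n" where
  "averaging_matrix = (\<chi> i j. 1 / real CARD('n))"

definition row_stochastic :: "real^'n^'m \<Rightarrow> bool" where
  "row_stochastic A \<longleftrightarrow> (\<forall>i j. 0 \<le> A $ i $ j) \<and> (\<forall>i. (\<Sum>j\<in>UNIV. A $ i $ j) = 1)"

lemma matrix_mult_diff_left:
  fixes A :: "real^'n^'m"
  shows "A ** (B - C) = A ** B - A ** C"
  by (simp add: matrix_matrix_mult_def vec_eq_iff right_diff_distrib sum_subtractf)

lemma matrix_mult_diff_right:
  fixes A :: "real^'n^'m"
  shows "(A - B) ** C = A ** C - B ** C"
  by (simp add: matrix_matrix_mult_def vec_eq_iff left_diff_distrib sum_subtractf)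

lemma matrix_mult_sum_right:
  fixes A :: "real^'n^'m" and B :: "'i \<Rightarrow> real^'p^'n"
  shows "A ** (\<Sum>i\<in>I. B i) = (\<Sum>i\<in>I. A ** B i)"
  by (induction I rule: infinite_finite_induct) (simp_all add: matrix_add_ldistrib)

lemma HC_eq: "HC X = X - averaging_matrix ** X"
  by (simp add: HC_def averaging_matrix_def matrix_mult_diff_right)

lemma averaging_matrix_mult_nth:
  fixes X :: "real^'d^'n"
  shows "(averaging_matrix ** X) $ i $ j = (\<Sum>k\<in>UNIV. X $ k $ j) / real CARD('n)"
  by (simp add: averaging_matrix_def matrix_matrix_mult_def sum_divide_distrib)

lemma frac_add_mono:
  fixes x y K :: real
  assumes "0 < x" "x \<le> y" "0 \<le> K"
  shows "x / (x + K) \<le> y / (y + K)"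
  using assms mult_right_mono[OF assms(2,3)] by (simp add: divide_simps algebra_simps)

lemma power2_norm_vec: "(norm (x :: 'a::real_normed_vector^'n))^2 = (\<Sum>j\<in>UNIV. (norm (x $ j))^2)"
  by (simp add: norm_vec_def L2_set_def sum_nonneg)

lemma power2_norm_matrix: "(norm (X :: real^'c^'r))^2 = (\<Sum>i\<in>UNIV. \<Sum>j\<in>UNIV. (X $ i $ j)^2)"
  by (simp add: power2_norm_vec)

lemma frob_norm_eq_norm: "frob_norm X = norm X"
  by (simp add: frob_norm_def flip: power2_norm_matrix)

lemma sum_power2_deviation_le:
  fixes z :: "'a \<Rightarrow> real"
  assumes "finite S"
  shows "(\<Sum>k\<in>S. (z k - sum z S / real (card S))^2) \<le> (\<Sum>k\<in>S. (z k)^2)"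
proof (cases "S = {}")
  case False
  define m where "m = sum z S / real (card S)"
  have "sum z S = real (card S) * m"
    using assms False by (simp add: m_def)
  have "(\<Sum>k\<in>S. (z k - m)^2) = (\<Sum>k\<in>S. (z k)^2 - 2 * m * z k + m^2)"
    by (intro sum.cong refl) (simp add: power2_eq_square algebra_simps)
  also have "\<dots> = (\<Sum>k\<in>S. (z k)^2) - 2 * m * sum z S + real (card S) * m^2"
    by (simp only: sum.distrib sum_subtractf sum_distrib_left[symmetric] sum_constant)
  also have "\<dots> = (\<Sum>k\<in>S. (z k)^2) - real (card S) * m^2"
    using \<open>sum z S = real (card S) * m\<close> by (simp add: power2_eq_square)
  finally show ?thesis
    by (simp add: m_def)
qed simp

lemma norm_HC_le: "norm (HC X) \<le> norm X"
proof -
  have column: "(\<Sum>i\<in>UNIV. (HC X $ i $ j)^2) \<le> (\<Sum>i\<in>UNIV. (X $ i $ j)^2)" for j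
    using sum_power2_deviation_le[of UNIV "\<lambda>k. X $ k $ j"]
    by (simp add: HC_eq averaging_matrix_mult_nth)
  have "(norm (HC X))^2 = (\<Sum>j\<in>UNIV. \<Sum>i\<in>UNIV. (HC X $ i $ j)^2)"
    unfolding power2_norm_matrix by (rule sum.swap)
  also have "\<dots> \<le> (\<Sum>j\<in>UNIV. \<Sum>i\<in>UNIV. (X $ i $ j)^2)"
    by (rule sum_mono[OF column])
  also have "\<dots> = (norm X)^2"
    unfolding power2_norm_matrix by (rule sum.swap)
  finally show ?thesis
    by (rule power2_le_imp_le) simp
qed

lemma row_stochastic_averaging_matrix: "row_stochastic averaging_matrix"
  by (simp add: row_stochastic_def averaging_matrix_def)

lemma row_stochastic_mult_averaging_matrix:
  fixes A :: "real^'n^'n"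
  assumes "row_stochastic A"
  shows "A ** averaging_matrix = averaging_matrix"
  using assms
  by (simp add: row_stochastic_def averaging_matrix_def matrix_matrix_mult_def vec_eq_iff
      flip: sum_divide_distrib)

lemma HC_averaging_matrix_mult:
  fixes X :: "real^'d^'n"
  shows "HC (averaging_matrix ** X) = 0"
proof -
  have "averaging_matrix ** averaging_matrix = (averaging_matrix :: real^'n^'n)"
    by (rule row_stochastic_mult_averaging_matrix[OF row_stochastic_averaging_matrix])
  then show ?thesis
    by (simp add: HC_eq matrix_mul_assoc)
qed

lemma HC_row_stochastic_mult_HC:
  fixes A :: "real^'n^'n" and X :: "real^'d^'n"
  assumes "row_stochastic A"
  shows "HC (A ** HC X) = HC (A ** X)"
proof -
  have "A ** HC X = A ** X - averaging_matrix ** X"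
    using row_stochastic_mult_averaging_matrix[OF assms]
    by (simp add: HC_eq matrix_mult_diff_left matrix_mul_assoc)
  then show ?thesis
    using HC_averaging_matrix_mult[of X] by (simp add: HC_def matrix_mult_diff_left)
qed

lemma row_stochastic_softmax: "row_stochastic (softmax P)"
proof -
  have "(\<Sum>t\<in>UNIV. exp (P $ i $ t)) \<noteq> 0" for i
    by (simp add: sum_nonneg_eq_0_iff)
  then show ?thesis
    by (simp add: row_stochastic_def softmax_def sum_nonneg flip: sum_divide_distrib)
qed

lemma softmax_le:
  fixes P :: "real^'n^'m"
  assumes bound: "\<And>j. \<bar>P $ i $ j\<bar> \<le> \<alpha>"
  shows "softmax P $ i $ k \<le> exp (2 * \<alpha>) / (exp (2 * \<alpha>) + real CARD('n) - 1)"
proof -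
  define K where "K = (real CARD('n) - 1) * exp (- \<alpha>)"
  define R where "R = (\<Sum>t\<in>UNIV - {k}. exp (P $ i $ t))"
  have "K = (\<Sum>t\<in>UNIV - {k}. exp (- \<alpha>))"
    by (simp add: K_def card_Diff_singleton of_nat_diff Suc_leI)
  also have "\<dots> \<le> R"
    unfolding R_def using bound by (intro sum_mono) (smt (verit) exp_le_cancel_iff)
  finally have "K \<le> R" .
  have "K \<ge> 0"
    by (simp add: K_def Suc_leI)
  have "softmax P $ i $ k = exp (P $ i $ k) / (exp (P $ i $ k) + R)"
    by (simp add: softmax_def R_def sum.remove[of UNIV k])
  also have "\<dots> \<le> exp (P $ i $ k) / (exp (P $ i $ k) + K)"
    using \<open>K \<le> R\<close> \<open>K \<ge> 0\<close> by (intro divide_left_mono mult_pos_pos add_pos_nonneg) auto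
  also have "\<dots> \<le> exp \<alpha> / (exp \<alpha> + K)"
    using bound[of k] \<open>K \<ge> 0\<close> by (intro frac_add_mono) (auto simp: abs_le_iff)
  also have "\<dots> = exp (2 * \<alpha>) / (exp (2 * \<alpha>) + real CARD('n) - 1)"
    by (simp add: K_def exp_minus mult_exp_exp field_simps)
  finally show ?thesis .
qed

lemma norm_row_stochastic_mult_le:
  fixes A :: "real^'n^'m" and Y :: "real^'d^'n"
  assumes "row_stochastic A" and column_sum: "\<And>k. (\<Sum>i\<in>UNIV. A $ i $ k) \<le> c"
  shows "norm (A ** Y) \<le> sqrt c * norm Y"
proof -
  have c_nonneg: "0 \<le> c"
    using assms(1) order_trans[OF sum_nonneg column_sum] unfolding row_stochastic_def by blast
  have "(norm (A ** Y))^2 = (\<Sum>i\<in>UNIV. \<Sum>j\<in>UNIV. (\<Sum>k\<in>UNIV. A $ i $ k * Y $ k $ j)^2)"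
    by (simp add: power2_norm_matrix matrix_matrix_mult_def)
  also have "\<dots> \<le> (\<Sum>i\<in>UNIV. \<Sum>j\<in>UNIV. \<Sum>k\<in>UNIV. A $ i $ k * (Y $ k $ j)^2)"
    using assms(1) unfolding row_stochastic_def
    by (intro sum_mono convex_on_sum[OF _ _ convex_power2, simplified]) auto
  also have "\<dots> = (\<Sum>i\<in>UNIV. \<Sum>k\<in>UNIV. A $ i $ k * (\<Sum>j\<in>UNIV. (Y $ k $ j)^2))"
    unfolding sum_distrib_left by (rule sum.cong[OF refl], rule sum.swap)
  also have "\<dots> = (\<Sum>k\<in>UNIV. (\<Sum>i\<in>UNIV. A $ i $ k) * (\<Sum>j\<in>UNIV. (Y $ k $ j)^2))"
    unfolding sum_distrib_right by (rule sum.swap)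
  also have "\<dots> \<le> (\<Sum>k\<in>UNIV. c * (\<Sum>j\<in>UNIV. (Y $ k $ j)^2))"
    by (intro sum_mono mult_right_mono column_sum sum_nonneg zero_le_power2)
  also have "\<dots> = (sqrt c * norm Y)^2"
    using c_nonneg by (simp add: power_mult_distrib power2_norm_matrix sum_distrib_left)
  finally show ?thesis
    by (rule power2_le_imp_le) (simp add: c_nonneg)
qed

lemma spec_norm_nonneg: "0 \<le> spec_norm W"
  unfolding spec_norm_def by (rule onorm_pos_le) simp

lemma norm_matrix_vector_mult_le: "norm (W *v x) \<le> spec_norm W * norm x"
  unfolding spec_norm_def by (rule onorm) simp

lemma norm_vector_matrix_mult_le: "norm (x v* W) \<le> norm x * spec_norm W"
  \<comment> \<open>Via \<open>\<parallel>x W\<parallel>\<^sup>2 = \<langle>x, W (x W)\<rangle>\<close>, which avoids comparing the operator norms of \<open>W\<close> and its transpose.\<close>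
proof (cases "x v* W = 0")
  case False
  have "(norm (x v* W))^2 = inner x (W *v (x v* W))"
    by (simp add: power2_norm_eq_inner dot_lmul_matrix)
  also have "\<dots> \<le> norm x * (spec_norm W * norm (x v* W))"
    by (intro order_trans[OF norm_cauchy_schwarz] mult_left_mono norm_matrix_vector_mult_le) simp
  finally show ?thesis
    using False by (simp add: power2_eq_square)
qed (simp add: spec_norm_nonneg)

lemma norm_matrix_mult_le: "norm (Z ** W) \<le> norm Z * spec_norm W"
proof -
  have "(Z ** W) $ i = Z $ i v* W" for i
    by (simp add: vec_eq_iff matrix_matrix_mult_def vector_matrix_mult_def mult.commute)
  then have "(norm (Z ** W))^2 \<le> (\<Sum>i\<in>UNIV. (norm (Z $ i) * spec_norm W)^2)"
    by (simp add: power2_norm_vec[of "Z ** W"] sum_mono power_mono norm_vector_matrix_mult_le)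
  also have "\<dots> = (norm Z * spec_norm W)^2"
    by (simp add: power2_norm_vec[of Z] power_mult_distrib sum_distrib_right)
  finally show ?thesis
    by (rule power2_le_imp_le) (simp add: spec_norm_nonneg)
qed

lemma HC_add: "HC (A + B) = HC A + HC B"
  by (simp add: HC_def matrix_add_ldistrib)

lemma HC_sum: "HC (\<Sum>i\<in>I. A i) = (\<Sum>i\<in>I. HC (A i))"
  by (simp add: HC_def matrix_mult_sum_right)

lemma HC_matrix_mult: "HC (Z ** W) = HC Z ** W"
  by (simp add: HC_def matrix_mul_assoc)

lemma norm_HC_attention_head_le:
  fixes P :: "real^'n^'n" and X :: "real^'d^'n" and WV :: "real^'e^'d" and WO :: "real^'f^'e"
  assumes bound: "\<And>i j. \<bar>P $ i $ j\<bar> \<le> \<alpha>"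
  shows "norm (HC (softmax P ** X ** WV ** WO))
    \<le> spec_norm WV * spec_norm WO
      * sqrt (real CARD('n) * exp (2 * \<alpha>) / (exp (2 * \<alpha>) + real CARD('n) - 1)) * norm (HC X)"
proof -
  let ?s = "sqrt (real CARD('n) * exp (2 * \<alpha>) / (exp (2 * \<alpha>) + real CARD('n) - 1))"
  have "(\<Sum>i\<in>UNIV. softmax P $ i $ k)
      \<le> real CARD('n) * exp (2 * \<alpha>) / (exp (2 * \<alpha>) + real CARD('n) - 1)" for k
    using sum_mono[of UNIV "\<lambda>i. softmax P $ i $ k", OF softmax_le[OF bound]] by simp
  then have "norm (softmax P ** HC X) \<le> ?s * norm (HC X)"
    by (rule norm_row_stochastic_mult_le[OF row_stochastic_softmax])
  then have "norm (HC (softmax P ** X)) \<le> ?s * norm (HC X)"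
    using norm_HC_le[of "softmax P ** HC X"]
    by (simp add: HC_row_stochastic_mult_HC[OF row_stochastic_softmax])
  then have "norm (HC (softmax P ** X) ** WV ** WO) \<le> ?s * norm (HC X) * spec_norm WV * spec_norm WO"
    by (intro order_trans[OF norm_matrix_mult_le] mult_right_mono spec_norm_nonneg
        order_trans[OF norm_matrix_mult_le])
  then show ?thesis
    by (simp add: HC_matrix_mult ac_simps)
qed

lemma norm_HC_MSA_residual_le:
  fixes P :: "nat \<Rightarrow> real^'n^'n" and WV WO :: "nat \<Rightarrow> real^'d^'d" and X :: "real^'d^'n"
  assumes logits: "\<And>h i j. h < H \<Longrightarrow> \<bar>P h $ i $ j\<bar> \<le> \<alpha>"
    and value_norm: "\<And>h. h < H \<Longrightarrow> spec_norm (WV h) \<le> \<sigma>1"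
    and output_norm: "\<And>h. h < H \<Longrightarrow> spec_norm (WO h) \<le> \<sigma>2"
  shows "norm (HC (MSA H P WV WO X + X))
    \<le> (1 + \<sigma>1 * \<sigma>2 * real H
          * sqrt (real CARD('n) * exp (2 * \<alpha>) / (exp (2 * \<alpha>) + real CARD('n) - 1)))
      * norm (HC X)"
proof -
  let ?s = "sqrt (real CARD('n) * exp (2 * \<alpha>) / (exp (2 * \<alpha>) + real CARD('n) - 1))"
  have "1 \<le> real CARD('n)"
    by (simp add: Suc_leI)
  then have "0 < exp (2 * \<alpha>) + real CARD('n) - 1"
    using exp_gt_zero[of "2 * \<alpha>"] by linarith
  then have "0 \<le> ?s"
    by simp
  have head: "norm (HC (softmax (P h) ** X ** WV h ** WO h)) \<le> \<sigma>1 * \<sigma>2 * ?s * norm (HC X)"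
    if "h < H" for h
  proof -
    have "spec_norm (WV h) * spec_norm (WO h) \<le> \<sigma>1 * \<sigma>2"
      using that value_norm output_norm by (intro mult_mono spec_norm_nonneg order_trans[OF spec_norm_nonneg])
    then have "spec_norm (WV h) * spec_norm (WO h) * (?s * norm (HC X)) \<le> \<sigma>1 * \<sigma>2 * (?s * norm (HC X))"
      using \<open>0 \<le> ?s\<close> by (intro mult_right_mono mult_nonneg_nonneg) simp_all
    with norm_HC_attention_head_le[of "P h" \<alpha> X "WV h" "WO h"] logits[OF that] show ?thesis
      by (simp add: ac_simps)
  qed
  have "norm (HC (MSA H P WV WO X + X))
      \<le> (\<Sum>h<H. norm (HC (softmax (P h) ** X ** WV h ** WO h))) + norm (HC X)"
    unfolding MSA_def HC_add HC_sum by (intro norm_triangle_le add_right_mono norm_sum)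
  also have "\<dots> \<le> (\<Sum>h<H. \<sigma>1 * \<sigma>2 * ?s * norm (HC X)) + norm (HC X)"
    using head by (intro add_right_mono sum_mono) simp
  finally show ?thesis
    by (simp add: algebra_simps)
qed

theorem proposition5:
  fixes H :: nat
    and P :: "nat \<Rightarrow> real^'n^'n"
    and WV WO :: "nat \<Rightarrow> real^'d^'d"
    and X :: "real^'d^'n"
    and \<alpha> \<sigma>1 \<sigma>2 :: real
  assumes "H \<ge> 1"
    and "\<alpha> = Max {\<bar>P h $ i $ j\<bar> | h i j. h < H}"
    and "\<sigma>1 = Max {spec_norm (WV h) | h. h < H}"
    and "\<sigma>2 = Max {spec_norm (WO h) | h. h < H}"
  shows "frob_norm (HC (MSA H P WV WO X + X))
         \<le> (1 + \<sigma>1 * \<sigma>2 * real H *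
              sqrt (real CARD('n) * exp (2 * \<alpha>) / (exp (2 * \<alpha>) + real CARD('n) - 1)))
           * frob_norm (HC X)"
proof -
  have "finite {\<bar>P h $ i $ j\<bar> | h i j. h < H}"
    by (rule finite_surj[of "{..<H} \<times> UNIV \<times> UNIV" _ "\<lambda>(h, i, j). \<bar>P h $ i $ j\<bar>"])
      (force simp: image_iff)+
  then have "\<bar>P h $ i $ j\<bar> \<le> \<alpha>" if "h < H" for h i j
    using Max_ge that unfolding assms(2) by blast
  moreover have "spec_norm (W h) \<le> Max {spec_norm (W h) | h. h < H}" if "h < H" for W h
    using that by (intro Max_ge) auto
  ultimately show ?thesis
    unfolding frob_norm_eq_norm assms(3,4) by (intro norm_HC_MSA_residual_le)
qed

end
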